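(* Let $G$ be the plane graph with nodes at the points $u_1=(0,2)$, $s_1=(1,2)$, $l_1=(2,0)$, $h_1=(2,4)$, $s_2=(3,2)$, $u_2=(4,2)$, $v_1=(6,2)$, $t_1=(7,2)$, $l_2=(8,0)$, $h_2=(8,4)$, $t_2=(9,2)$, $v_2=(10,2)$ and straight-line edges $l_1l_2$, $h_1h_2$, $l_1u_1$, $l_1u_2$, $h_1u_1$, $h_1u_2$, $l_2v_1$, $l_2v_2$, $h_2v_1$, $h_2v_2$, $s_1u_1$, $s_2u_2$, $t_1v_1$, $t_2v_2$, all of capacity $1$, and let $H$ consist of the two demands $s_1t_1$ and $s_2t_2$, each of demand $1$. Then this instance has exactly two path-solutions, and both are integral.
   Context: A path-solution is a (possibly fractional) multiflow $f\ge0$ on simple paths of $G$ routing at least one unit between $s_1,t_1$ and at least one unit between $s_2,t_2$, with total flow at most $1$ on every edge, whose support paths ($f(P)>0$) are pairwise uncrossed. Two paths $P,Q$ of the embedded graph cross if there is a maximal common subpath $Z$ (possibly a single node) containing no endpoint of $P$ or $Q$ such that, writing $P=P_1,e,Z,e',P_2$ and $Q=Q_1,g,Z,g',Q_2$, the edges $e,g,e',g'$ alternate between $P$ and $Q$ in the clockwise order around $Z$. *)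

theory Defs
  imports "HOL-Analysis.Analysis" "HOL-Library.Sublist"
begin

datatype node = U1 | S1 | L1 | H1 | S2 | U2 | V1 | T1 | L2 | H2 | T2 | V2

fun coord :: "node \<Rightarrow> complex" where
  "coord U1 = Complex 0 2"
| "coord S1 = Complex 1 2"
| "coord L1 = Complex 2 0"
| "coord H1 = Complex 2 4"
| "coord S2 = Complex 3 2"
| "coord U2 = Complex 4 2"
| "coord V1 = Complex 6 2"
| "coord T1 = Complex 7 2"
| "coord L2 = Complex 8 0"
| "coord H2 = Complex 8 4"
| "coord T2 = Complex 9 2"
| "coord V2 = Complex 10 2"

text \<open>Edges (undirected, straight-line, all of capacity 1).\<close>
definition E :: "node set set" where
  "E = {{L1,L2},{H1,H2},{L1,U1},{L1,U2},{H1,U1},{H1,U2},{L2,V1},{L2,V2},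
        {H2,V1},{H2,V2},{S1,U1},{S2,U2},{T1,V1},{T2,V2}}"

definition path_edges :: "node list \<Rightarrow> node set set" where
  "path_edges P = {{P ! i, P ! Suc i} | i. Suc i < length P}"

definition simple_path :: "node list \<Rightarrow> bool" where
  "simple_path P \<longleftrightarrow> P \<noteq> [] \<and> distinct P \<and> path_edges P \<subseteq> E"

text \<open>H-paths: simple paths routing demand s1t1 or s2t2 (each path is written
  starting at its source s_i, so a path and its reversal are not counted twice).\<close>
definition H_path :: "node list \<Rightarrow> bool" where
  "H_path P \<longleftrightarrow> simple_path P \<and>
     ((hd P = S1 \<and> last P = T1) \<or> (hd P = S2 \<and> last P = T2))"

text \<open>Clockwise angle, at node z, by which the direction towards a must be
  rotated clockwise to reach the direction towards w (value in [0, 2 pi)).\<close>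
definition cw_angle :: "node \<Rightarrow> node \<Rightarrow> node \<Rightarrow> real" where
  "cw_angle z a w =
     (let d = Arg (coord a - coord z) - Arg (coord w - coord z)
      in if d < 0 then d + 2 * pi else d)"

text \<open>Position of a dart (z, w) (an edge zw leaving the common subpath Z at its end
  node z) in the clockwise boundary walk around Z.  For a single node Z this is the
  clockwise angular order at z; for a longer path Z = z_1 ... z_k the boundary walk
  first sweeps clockwise around z_1 starting after the edge z_1 z_2, then (after the
  darts at interior nodes on one side) sweeps clockwise around z_k starting after the
  edge z_k z_(k-1).  Only darts at the end nodes of Z are needed.  Any cut of the
  cyclic order gives the same notion of alternation.\<close>
definition dart_pos :: "node list \<Rightarrow> node \<times> node \<Rightarrow> real" where
  "dart_pos Z d =
     (let z = fst d; w = snd d in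
      if length Z = 1 then - Arg (coord w - coord z)
      else if z = hd Z then cw_angle z (Z ! 1) w
      else 2 * pi + cw_angle z (Z ! (length Z - 2)) w)"

definition alternate :: "node list \<Rightarrow> node \<times> node \<Rightarrow> node \<times> node \<Rightarrow> node \<times> node \<Rightarrow> node \<times> node \<Rightarrow> bool" where
  "alternate Z e g e' g' =
     (let x = dart_pos Z e; y = dart_pos Z e';
          betw = (\<lambda>p. min x y < p \<and> p < max x y)
      in betw (dart_pos Z g) \<noteq> betw (dart_pos Z g'))"

definition common_subpath :: "node list \<Rightarrow> node list \<Rightarrow> node list \<Rightarrow> bool" where
  "common_subpath P Q Z \<longleftrightarrow> Z \<noteq> [] \<and> sublist Z P \<and> (sublist Z Q \<or> sublist (rev Z) Q)"

definition maximal_common_subpath :: "node list \<Rightarrow> node list \<Rightarrow> node list \<Rightarrow> bool" where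
  "maximal_common_subpath P Q Z \<longleftrightarrow> common_subpath P Q Z \<and>
     (\<forall>Z'. common_subpath P Q Z' \<and> (sublist Z Z' \<or> sublist (rev Z) Z') \<longrightarrow> length Z' \<le> length Z)"

definition crosses :: "node list \<Rightarrow> node list \<Rightarrow> bool" where
  "crosses P Q \<longleftrightarrow> (\<exists>Z P1 P2 Q1 Q2.
     maximal_common_subpath P Q Z \<and>
     (\<forall>z\<in>set Z. z \<notin> {hd P, last P, hd Q, last Q}) \<and>
     P1 \<noteq> [] \<and> P2 \<noteq> [] \<and> Q1 \<noteq> [] \<and> Q2 \<noteq> [] \<and>
     P = P1 @ Z @ P2 \<and>
     ((Q = Q1 @ Z @ Q2 \<and>
        alternate Z (hd Z, last P1) (hd Z, last Q1) (last Z, hd P2) (last Z, hd Q2)) \<or>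
      (Q = Q1 @ rev Z @ Q2 \<and>
        alternate Z (hd Z, last P1) (last Z, last Q1) (last Z, hd P2) (hd Z, hd Q2))))"

definition path_solution :: "(node list \<Rightarrow> real) \<Rightarrow> bool" where
  "path_solution f \<longleftrightarrow>
     (\<forall>P. f P \<ge> 0) \<and> (\<forall>P. f P > 0 \<longrightarrow> H_path P) \<and>
     (\<Sum>P\<in>{P. H_path P \<and> hd P = S1 \<and> last P = T1}. f P) \<ge> 1 \<and>
     (\<Sum>P\<in>{P. H_path P \<and> hd P = S2 \<and> last P = T2}. f P) \<ge> 1 \<and>
     (\<forall>e\<in>E. (\<Sum>P\<in>{P. H_path P \<and> e \<in> path_edges P}. f P) \<le> 1) \<and>
     (\<forall>P Q. f P > 0 \<and> f Q > 0 \<and> P \<noteq> Q \<longrightarrow> \<not> crosses P Q)"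

end

theory Submission
  imports Defs
begin

(* G has exactly eight simple s1-t1 paths and eight simple s2-t2 paths, so a path-solution is
   a nonnegative vector on sixteen paths subject to the demand and capacity inequalities and to
   the condition that, for each of twelve crossing pairs, one of the two paths carries no flow.
   Each of these crossings happens along a single shared edge, where the alternation of the four
   leaving edges is read off from the coordinates.  The resulting finite system has exactly two
   solutions: one demand is routed with value 1 through l1 l2 and the other through h1 h2, along
   vertex-disjoint paths; and any two vertex-disjoint paths for the two demands do form a
   path-solution. *)

lemma path_edges_conv_zip: "path_edges P = (\<lambda>(a, b). {a, b}) ` set (zip P (tl P))"
  by (force simp: path_edges_def set_zip nth_tl image_iff)

lemma path_edges_singleton [simp]: "path_edges [a] = {}"
  by (simp add: path_edges_conv_zip)

lemma path_edges_Cons_Cons [simp]: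
  "path_edges (a # b # P) = insert {a, b} (path_edges (b # P))"
  by (simp add: path_edges_conv_zip)

lemma path_edges_subset_set: "e \<in> path_edges P \<Longrightarrow> e \<subseteq> set P"
  by (auto simp: path_edges_def)

lemma UNIV_node: "(UNIV :: node set) = {U1, S1, L1, H1, S2, U2, V1, T1, L2, H2, T2, V2}"
  by (auto intro: node.exhaust)

lemma finite_H_paths: "finite {P. H_path P}"
proof (rule finite_subset)
  show "{P. H_path P} \<subseteq> {P. set P \<subseteq> UNIV \<and> distinct P}"
    by (auto simp: H_path_def simple_path_def)
  show "finite {P :: node list. set P \<subseteq> UNIV \<and> distinct P}"
    by (rule finite_subset_distinct) (simp add: UNIV_node)
qed

lemma crosses_irrefl: "\<not> crosses P P"
proof
  assume "crosses P P"
  then obtain Z where max: "maximal_common_subpath P P Z"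
    and inner: "\<forall>z\<in>set Z. z \<notin> {hd P, last P, hd P, last P}"
    unfolding crosses_def by blast
  then have "Z \<noteq> []" "sublist Z P"
    by (auto simp: maximal_common_subpath_def common_subpath_def)
  moreover have "length P \<le> length Z"
    using max \<open>Z \<noteq> []\<close> \<open>sublist Z P\<close>
    unfolding maximal_common_subpath_def common_subpath_def by (auto dest!: spec[of _ P])
  ultimately have "Z = P"
    by (metis sublist_imp_subseq sublist_length_le subseq_same_length le_antisym)
  then show False
    using inner \<open>Z \<noteq> []\<close> by auto
qed

lemma not_crosses_if_disjoint: "set P \<inter> set Q = {} \<Longrightarrow> \<not> crosses P Q"
proof
  assume disjoint: "set P \<inter> set Q = {}" and "crosses P Q"
  then obtain Z where "common_subpath P Q Z"
    unfolding crosses_def maximal_common_subpath_def by blast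
  then have "hd Z \<in> set P" "hd Z \<in> set Q"
    unfolding common_subpath_def by (metis hd_in_set set_mono_sublist set_rev subsetD)+
  then show False
    using disjoint by blast
qed

lemma path_solution_crossing_vanishes:
  "path_solution f \<Longrightarrow> crosses P Q \<Longrightarrow> f P = 0 \<or> f Q = 0"
  unfolding path_solution_def by (metis crosses_irrefl order.not_eq_order_implies_strict)

lemma sum_indicator_H_paths:
  "(\<Sum>R | H_path R \<and> \<Phi> R. indicator S R :: real) = card ({R. H_path R \<and> \<Phi> R} \<inter> S)"
proof -
  have "finite {R. H_path R \<and> \<Phi> R}"
    by (rule finite_subset[OF _ finite_H_paths]) auto
  from sum.inter_restrict[OF this, of "\<lambda>_. 1 :: real" S]
  show ?thesis
    by (simp add: indicator_def of_bool_def)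
qed

lemma disjoint_H_paths_path_solution:
  assumes P_path: "H_path P" "hd P = S1" "last P = T1"
    and Q_path: "H_path Q" "hd Q = S2" "last Q = T2"
    and disjoint: "set P \<inter> set Q = {}"
  shows "path_solution (indicator {P, Q})"
  unfolding path_solution_def
proof (intro conjI allI impI)
  have "{R. H_path R \<and> hd R = S1 \<and> last R = T1} \<inter> {P, Q} = {P}"
    using P_path Q_path by auto
  then show "(\<Sum>R | H_path R \<and> hd R = S1 \<and> last R = T1. indicator {P, Q} R) \<ge> (1 :: real)"
    by (simp add: sum_indicator_H_paths)
  have "{R. H_path R \<and> hd R = S2 \<and> last R = T2} \<inter> {P, Q} = {Q}"
    using P_path Q_path by auto
  then show "(\<Sum>R | H_path R \<and> hd R = S2 \<and> last R = T2. indicator {P, Q} R) \<ge> (1 :: real)"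
    by (simp add: sum_indicator_H_paths)
  show "\<forall>e\<in>E. (\<Sum>R | H_path R \<and> e \<in> path_edges R. indicator {P, Q} R) \<le> (1 :: real)"
  proof
    fix e assume "e \<in> E"
    then have "e \<noteq> {}"
      by (auto simp: E_def)
    then have "\<not> (e \<in> path_edges P \<and> e \<in> path_edges Q)"
      using disjoint path_edges_subset_set by blast
    then have "{R. H_path R \<and> e \<in> path_edges R} \<inter> {P, Q} \<subseteq> {P}
        \<or> {R. H_path R \<and> e \<in> path_edges R} \<inter> {P, Q} \<subseteq> {Q}"
      by blast
    then have "card ({R. H_path R \<and> e \<in> path_edges R} \<inter> {P, Q}) \<le> 1"
      using card_mono[of "{P}"] card_mono[of "{Q}"] by fastforce
    then show "(\<Sum>R | H_path R \<and> e \<in> path_edges R. indicator {P, Q} R) \<le> (1 :: real)"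
      by (simp add: sum_indicator_H_paths)
  qed
  fix R R'
  show "0 \<le> (indicator {P, Q} R :: real)"
    by simp
  show "0 < (indicator {P, Q} R :: real) \<Longrightarrow> H_path R"
    using P_path(1) Q_path(1) by (auto simp: indicator_def of_bool_def split: if_splits)
  assume "0 < (indicator {P, Q} R :: real) \<and> 0 < (indicator {P, Q} R' :: real) \<and> R \<noteq> R'"
  then have "R = P \<and> R' = Q \<or> R = Q \<and> R' = P"
    by (auto simp: indicator_def of_bool_def split: if_splits)
  then show "\<not> crosses R R'"
    by (metis Int_commute disjoint not_crosses_if_disjoint)
qed

fun neighbours :: "node \<Rightarrow> node list" where
  "neighbours U1 = [L1, H1, S1]"
| "neighbours S1 = [U1]"
| "neighbours L1 = [L2, U1, U2]"
| "neighbours H1 = [H2, U1, U2]"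
| "neighbours S2 = [U2]"
| "neighbours U2 = [L1, H1, S2]"
| "neighbours V1 = [L2, H2, T1]"
| "neighbours T1 = [V1]"
| "neighbours L2 = [L1, V1, V2]"
| "neighbours H2 = [H1, V1, V2]"
| "neighbours T2 = [V2]"
| "neighbours V2 = [L2, H2, T2]"

lemma edge_iff_neighbour: "{a, b} \<in> E \<longleftrightarrow> b \<in> set (neighbours a)"
  by (cases a; cases b) (simp_all add: E_def doubleton_eq_iff)

fun simple_paths_to :: "nat \<Rightarrow> node list \<Rightarrow> node \<Rightarrow> node \<Rightarrow> node list list" where
  "simple_paths_to 0 V a t = (if a = t then [[a]] else [])"
| "simple_paths_to (Suc n) V a t = (if a = t then [[a]] else
     concat (map (\<lambda>b. if b \<in> set (a # V) then []
                       else map ((#) a) (simple_paths_to n (a # V) b t)) (neighbours a)))"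

lemma simple_paths_to_complete:
  assumes "distinct (a # P)" "path_edges (a # P) \<subseteq> E" "last (a # P) = t"
    and "set (a # P) \<inter> set V = {}" "length P \<le> n"
  shows "a # P \<in> set (simple_paths_to n V a t)"
  using assms
proof (induction n arbitrary: V a P)
  case 0
  then show ?case by simp
next
  case (Suc n)
  show ?case
  proof (cases "a = t")
    case True
    then have "P = []"
      using Suc.prems(1,3) by (metis distinct.simps(2) last_ConsR last_in_set)
    with True show ?thesis by simp
  next
    case False
    then obtain b P' where P: "P = b # P'"
      using Suc.prems(3) by (cases P) auto
    have "b \<in> set (neighbours a)"
      using Suc.prems(2) P by (simp add: edge_iff_neighbour)
    moreover have "b \<notin> set (a # V)"
      using Suc.prems(1,4) P by auto
    moreover have "b # P' \<in> set (simple_paths_to n (a # V) b t)"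
      using Suc.prems P by (intro Suc.IH) auto
    ultimately show ?thesis
      using False P by force
  qed
qed

lemma length_distinct_node_list: "distinct (P :: node list) \<Longrightarrow> length P \<le> 12"
proof -
  assume "distinct P"
  then have "length P = card (set P)"
    by (simp add: distinct_card)
  also have "\<dots> \<le> card (UNIV :: node set)"
    by (rule card_mono) (simp add: UNIV_node, simp)
  also have "\<dots> = 12"
    by (simp add: UNIV_node)
  finally show ?thesis .
qed

lemma H_path_enumerated:
  assumes "H_path P"
  shows "P \<in> set (simple_paths_to 11 [] (hd P) (last P))"
proof -
  from assms have "P \<noteq> []" "distinct P" "path_edges P \<subseteq> E"
    by (auto simp: H_path_def simple_path_def)
  moreover have "length P \<le> 12"
    using \<open>distinct P\<close> by (rule length_distinct_node_list)
  ultimately show ?thesis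
    using simple_paths_to_complete[of "hd P" "tl P" "last P" "[]" 11] by simp
qed

definition "pa0 = [S1, U1, L1, L2, V1, T1]"
definition "pa1 = [S1, U1, L1, L2, V2, H2, V1, T1]"
definition "pa2 = [S1, U1, L1, U2, H1, H2, V1, T1]"
definition "pa3 = [S1, U1, L1, U2, H1, H2, V2, L2, V1, T1]"
definition "pa4 = [S1, U1, H1, H2, V1, T1]"
definition "pa5 = [S1, U1, H1, H2, V2, L2, V1, T1]"
definition "pa6 = [S1, U1, H1, U2, L1, L2, V1, T1]"
definition "pa7 = [S1, U1, H1, U2, L1, L2, V2, H2, V1, T1]"
definition "pb0 = [S2, U2, L1, L2, V1, H2, V2, T2]"
definition "pb1 = [S2, U2, L1, L2, V2, T2]"
definition "pb2 = [S2, U2, L1, U1, H1, H2, V1, L2, V2, T2]"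
definition "pb3 = [S2, U2, L1, U1, H1, H2, V2, T2]"
definition "pb4 = [S2, U2, H1, H2, V1, L2, V2, T2]"
definition "pb5 = [S2, U2, H1, H2, V2, T2]"
definition "pb6 = [S2, U2, H1, U1, L1, L2, V1, H2, V2, T2]"
definition "pb7 = [S2, U2, H1, U1, L1, L2, V2, T2]"

lemmas H_path_defs = pa0_def pa1_def pa2_def pa3_def pa4_def pa5_def pa6_def pa7_def
  pb0_def pb1_def pb2_def pb3_def pb4_def pb5_def pb6_def pb7_def

definition "pathsA = [pa0, pa1, pa2, pa3, pa4, pa5, pa6, pa7]"
definition "pathsB = [pb0, pb1, pb2, pb3, pb4, pb5, pb6, pb7]"

lemma simple_paths_S1_T1: "simple_paths_to 11 [] S1 T1 = pathsA"
  unfolding pathsA_def H_path_defs by (simp add: eval_nat_numeral)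

lemma simple_paths_S2_T2: "simple_paths_to 11 [] S2 T2 = pathsB"
  unfolding pathsB_def H_path_defs by (simp add: eval_nat_numeral)

lemma H_paths_listed: "list_all H_path (pathsA @ pathsB)"
  unfolding pathsA_def pathsB_def H_path_defs
  by (simp add: H_path_def simple_path_def edge_iff_neighbour)

lemma H_path_iff: "H_path P \<longleftrightarrow> P \<in> set (pathsA @ pathsB)"
proof
  assume "H_path P"
  then have "P \<in> set (simple_paths_to 11 [] (hd P) (last P))"
    and "hd P = S1 \<and> last P = T1 \<or> hd P = S2 \<and> last P = T2"
    by (auto simp: H_path_enumerated H_path_def)
  then show "P \<in> set (pathsA @ pathsB)"
    by (auto simp: simple_paths_S1_T1 simple_paths_S2_T2)
qed (use H_paths_listed in \<open>simp add: list_all_iff\<close>)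

lemma sum_over_H_paths:
  "(\<Sum>P | H_path P \<and> \<Phi> P. g P) = (\<Sum>P\<leftarrow>filter \<Phi> (pathsA @ pathsB). g P)"
proof -
  have "distinct (filter \<Phi> (pathsA @ pathsB))"
    by (rule distinct_filter) (simp add: pathsA_def pathsB_def H_path_defs)
  moreover have "{P. H_path P \<and> \<Phi> P} = set (filter \<Phi> (pathsA @ pathsB))"
    by (auto simp: H_path_iff)
  ultimately show ?thesis
    by (simp only: sum_list_distinct_conv_sum_set)
qed

lemma Arg_polar:
  "0 < r \<Longrightarrow> -pi < t \<Longrightarrow> t \<le> pi \<Longrightarrow> Arg (Complex (r * cos t) (r * sin t)) = t"
  by (rule Arg_unique[of r]) (simp_all add: cis_conv_exp[symmetric] complex_eq_iff)

lemma cos_sin_3pi_4: "cos (3 * pi / 4) = - (sqrt 2 / 2)" "sin (3 * pi / 4) = sqrt 2 / 2"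
  using cos_pi_minus[of "pi / 4"] sin_pi_minus[of "pi / 4"]
  by (simp_all add: cos_45 sin_45 field_simps)

lemma Arg_east: "0 < a \<Longrightarrow> Arg (Complex a 0) = 0"
  by (simp add: Arg_eq_0 complex_is_Real_iff)

lemma Arg_west: "a < 0 \<Longrightarrow> Arg (Complex a 0) = pi"
  by (simp add: Arg_eq_pi)

lemma Arg_northeast: "0 < a \<Longrightarrow> Arg (Complex a a) = pi / 4"
  using Arg_polar[of "a * sqrt 2" "pi / 4"] by (simp add: cos_45 sin_45 mult.assoc)

lemma Arg_northwest: "0 < a \<Longrightarrow> Arg (Complex (- a) a) = 3 * pi / 4"
  using Arg_polar[of "a * sqrt 2" "3 * pi / 4"] by (simp add: cos_sin_3pi_4 mult.assoc)

lemma Arg_southeast: "0 < a \<Longrightarrow> Arg (Complex a (- a)) = - (pi / 4)"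
  using Arg_polar[of "a * sqrt 2" "- (pi / 4)"] pi_gt_zero by (simp add: cos_45 sin_45 mult.assoc)

lemma Arg_southwest: "0 < a \<Longrightarrow> Arg (Complex (- a) (- a)) = - (3 * pi / 4)"
  using Arg_polar[of "a * sqrt 2" "- (3 * pi / 4)"] pi_gt_zero
  by (simp add: cos_sin_3pi_4 mult.assoc)


lemma sublist_pair_extends:
  assumes "sublist [x, y] Z" "length Z > 2"
  shows "\<exists>w. sublist [w, x, y] Z \<or> sublist [x, y, w] Z"
proof -
  obtain ps ss where Z: "Z = ps @ [x, y] @ ss"
    using assms(1) by (auto simp: sublist_def)
  show ?thesis
  proof (cases "ps = []")
    case False
    then have "Z = butlast ps @ [last ps, x, y] @ ss"
      using Z by simp
    then show ?thesis
      by (metis sublist_appendI)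
  next
    case True
    then have "Z = [] @ [x, y, hd ss] @ tl ss"
      using Z assms(2) by (cases ss) auto
    then show ?thesis
      by (metis sublist_appendI)
  qed
qed

lemma maximal_common_subpath_pairI:
  assumes "common_subpath P Q [x, y]"
    and "\<And>w W. W \<in> {[w, x, y], [x, y, w], [w, y, x], [y, x, w]} \<Longrightarrow> sublist W P \<Longrightarrow>
      sublist W Q \<or> sublist (rev W) Q \<Longrightarrow> False"
  shows "maximal_common_subpath P Q [x, y]"
  unfolding maximal_common_subpath_def
proof (intro conjI allI impI)
  show "common_subpath P Q [x, y]" by fact
  fix Z assume Z: "common_subpath P Q Z \<and> (sublist [x, y] Z \<or> sublist (rev [x, y]) Z)"
  show "length Z \<le> length [x, y]"
  proof (rule ccontr)
    assume "\<not> ?thesis"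
    then have long: "length Z > 2" by simp
    from Z have "sublist [x, y] Z \<or> sublist [y, x] Z" by simp
    then obtain w W where W: "W \<in> {[w, x, y], [x, y, w], [w, y, x], [y, x, w]}" "sublist W Z"
      using sublist_pair_extends[OF _ long, of x y] sublist_pair_extends[OF _ long, of y x] by blast
    from Z have "sublist Z P" "sublist Z Q \<or> sublist (rev Z) Q"
      by (auto simp: common_subpath_def)
    with W(2) have "sublist W P" "sublist W Q \<or> sublist (rev W) Q"
      by (metis sublist_order.order.trans sublist_rev)+
    with W(1) show False by (rule assms(2))
  qed
qed

lemma crosses_along_edge:
  assumes "P = Pa @ [x, y] @ Pb" "Q = Qa @ [x, y] @ Qb"
    and "Pa \<noteq> []" "Pb \<noteq> []" "Qa \<noteq> []" "Qb \<noteq> []"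
    and "x \<notin> {hd P, last P, hd Q, last Q}" "y \<notin> {hd P, last P, hd Q, last Q}"
    and "\<And>w W. W \<in> {[w, x, y], [x, y, w], [w, y, x], [y, x, w]} \<Longrightarrow> sublist W P \<Longrightarrow>
      sublist W Q \<or> sublist (rev W) Q \<Longrightarrow> False"
    and "alternate [x, y] (x, last Pa) (x, last Qa) (y, hd Pb) (y, hd Qb)"
  shows "crosses P Q"
proof -
  have "maximal_common_subpath P Q [x, y]"
  proof (rule maximal_common_subpath_pairI)
    show "common_subpath P Q [x, y]"
      using sublist_appendI[of "[x, y]" Pa Pb] sublist_appendI[of "[x, y]" Qa Qb]
      by (simp add: assms(1,2) common_subpath_def)
  qed (use assms(9) in blast)
  then show ?thesis
    unfolding crosses_def using assms(1-8,10)
    by (intro exI[of _ "[x, y]"] exI[of _ Pa] exI[of _ Pb] exI[of _ Qa] exI[of _ Qb]) simp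
qed

lemma crosses_along_reversed_edge:
  assumes "P = Pa @ [x, y] @ Pb" "Q = Qa @ [y, x] @ Qb"
    and "Pa \<noteq> []" "Pb \<noteq> []" "Qa \<noteq> []" "Qb \<noteq> []"
    and "x \<notin> {hd P, last P, hd Q, last Q}" "y \<notin> {hd P, last P, hd Q, last Q}"
    and "\<And>w W. W \<in> {[w, x, y], [x, y, w], [w, y, x], [y, x, w]} \<Longrightarrow> sublist W P \<Longrightarrow>
      sublist W Q \<or> sublist (rev W) Q \<Longrightarrow> False"
    and "alternate [x, y] (x, last Pa) (y, last Qa) (y, hd Pb) (x, hd Qb)"
  shows "crosses P Q"
proof -
  have "maximal_common_subpath P Q [x, y]"
  proof (rule maximal_common_subpath_pairI)
    show "common_subpath P Q [x, y]"
      using sublist_appendI[of "[x, y]" Pa Pb] sublist_appendI[of "[y, x]" Qa Qb]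
      by (simp add: assms(1,2) common_subpath_def)
  qed (use assms(9) in blast)
  then show ?thesis
    unfolding crosses_def using assms(1-8,10)
    by (intro exI[of _ "[x, y]"] exI[of _ Pa] exI[of _ Pb] exI[of _ Qa] exI[of _ Qb]) simp
qed

lemmas crossing_check_simps = H_path_defs sublist_code prefix_code
  alternate_def dart_pos_def cw_angle_def Let_def complex_diff pi_gt_zero
  Arg_east Arg_west Arg_northeast Arg_northwest Arg_southeast Arg_southwest

lemma crossing_H_paths:
  shows "crosses pa1 pb3" and "crosses pa2 pb0" and "crosses pa2 pb1"
    and "crosses pa5 pb7" and "crosses pa6 pb4" and "crosses pa6 pb5"
    and "crosses pa0 pb4" and "crosses pa4 pb0" and "crosses pa0 pb1"
    and "crosses pa4 pb5" and "crosses pb1 pb6" and "crosses pb2 pb5"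
proof -
  show "crosses pa1 pb3"
    by (rule crosses_along_reversed_edge[of _ "[S1]" U1 L1 "[L2, V2, H2, V1, T1]"
        _ "[S2, U2]" "[H1, H2, V2, T2]"])
      (auto simp: crossing_check_simps)
  show "crosses pa2 pb0"
    by (rule crosses_along_reversed_edge[of _ "[S1, U1]" L1 U2 "[H1, H2, V1, T1]"
        _ "[S2]" "[L2, V1, H2, V2, T2]"])
      (auto simp: crossing_check_simps)
  show "crosses pa2 pb1"
    by (rule crosses_along_reversed_edge[of _ "[S1, U1]" L1 U2 "[H1, H2, V1, T1]"
        _ "[S2]" "[L2, V2, T2]"])
      (auto simp: crossing_check_simps)
  show "crosses pa5 pb7"
    by (rule crosses_along_reversed_edge[of _ "[S1]" U1 H1 "[H2, V2, L2, V1, T1]"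
        _ "[S2, U2]" "[L1, L2, V2, T2]"])
      (auto simp: crossing_check_simps)
  show "crosses pa6 pb4"
    by (rule crosses_along_reversed_edge[of _ "[S1, U1]" H1 U2 "[L1, L2, V1, T1]"
        _ "[S2]" "[H2, V1, L2, V2, T2]"])
      (auto simp: crossing_check_simps)
  show "crosses pa6 pb5"
    by (rule crosses_along_reversed_edge[of _ "[S1, U1]" H1 U2 "[L1, L2, V1, T1]"
        _ "[S2]" "[H2, V2, T2]"])
      (auto simp: crossing_check_simps)
  show "crosses pa0 pb4"
    by (rule crosses_along_reversed_edge[of _ "[S1, U1, L1]" L2 V1 "[T1]"
        _ "[S2, U2, H1, H2]" "[V2, T2]"])
      (auto simp: crossing_check_simps)
  show "crosses pa4 pb0"
    by (rule crosses_along_reversed_edge[of _ "[S1, U1, H1]" H2 V1 "[T1]"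
        _ "[S2, U2, L1, L2]" "[V2, T2]"])
      (auto simp: crossing_check_simps)
  show "crosses pa0 pb1"
    by (rule crosses_along_edge[of _ "[S1, U1]" L1 L2 "[V1, T1]"
        _ "[S2, U2]" "[V2, T2]"])
      (auto simp: crossing_check_simps)
  show "crosses pa4 pb5"
    by (rule crosses_along_edge[of _ "[S1, U1]" H1 H2 "[V1, T1]"
        _ "[S2, U2]" "[V2, T2]"])
      (auto simp: crossing_check_simps)
  show "crosses pb1 pb6"
    by (rule crosses_along_edge[of _ "[S2, U2]" L1 L2 "[V2, T2]"
        _ "[S2, U2, H1, U1]" "[V1, H2, V2, T2]"])
      (auto simp: crossing_check_simps)
  show "crosses pb2 pb5"
    by (rule crosses_along_edge[of _ "[S2, U2, L1, U1]" H1 H2 "[V1, L2, V2, T2]"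
        _ "[S2, U2]" "[V2, T2]"])
      (auto simp: crossing_check_simps)
qed

definition edge_load :: "(node list \<Rightarrow> real) \<Rightarrow> node set \<Rightarrow> real" where
  "edge_load f e = (\<Sum>P | H_path P \<and> e \<in> path_edges P. f P)"

lemma edge_load_table:
  "edge_load f {L1, L2} = (\<Sum>P\<leftarrow>[pa0, pa1, pa6, pa7, pb0, pb1, pb6, pb7]. f P)"
  "edge_load f {H1, H2} = (\<Sum>P\<leftarrow>[pa2, pa3, pa4, pa5, pb2, pb3, pb4, pb5]. f P)"
  "edge_load f {L1, U1} = (\<Sum>P\<leftarrow>[pa0, pa1, pa2, pa3, pb2, pb3, pb6, pb7]. f P)"
  "edge_load f {L1, U2} = (\<Sum>P\<leftarrow>[pa2, pa3, pa6, pa7, pb0, pb1, pb2, pb3]. f P)"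
  "edge_load f {H1, U1} = (\<Sum>P\<leftarrow>[pa4, pa5, pa6, pa7, pb2, pb3, pb6, pb7]. f P)"
  "edge_load f {H1, U2} = (\<Sum>P\<leftarrow>[pa2, pa3, pa6, pa7, pb4, pb5, pb6, pb7]. f P)"
  "edge_load f {L2, V1} = (\<Sum>P\<leftarrow>[pa0, pa3, pa5, pa6, pb0, pb2, pb4, pb6]. f P)"
  "edge_load f {L2, V2} = (\<Sum>P\<leftarrow>[pa1, pa3, pa5, pa7, pb1, pb2, pb4, pb7]. f P)"
  "edge_load f {H2, V1} = (\<Sum>P\<leftarrow>[pa1, pa2, pa4, pa7, pb0, pb2, pb4, pb6]. f P)"
  "edge_load f {H2, V2} = (\<Sum>P\<leftarrow>[pa1, pa3, pa5, pa7, pb0, pb3, pb5, pb6]. f P)"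
  by (simp_all add: edge_load_def sum_over_H_paths pathsA_def pathsB_def H_path_defs
      doubleton_eq_iff)

lemma demand_sums:
  "(\<Sum>P | H_path P \<and> hd P = S1 \<and> last P = T1. g P) = (\<Sum>P\<leftarrow>pathsA. g P)"
  "(\<Sum>P | H_path P \<and> hd P = S2 \<and> last P = T2. g P) = (\<Sum>P\<leftarrow>pathsB. g P)"
  by (simp_all add: sum_over_H_paths pathsA_def pathsB_def H_path_defs)

lemma path_solution_values:
  assumes sol: "path_solution f"
  shows "map f (pathsA @ pathsB) = map (indicator {pa0, pb5}) (pathsA @ pathsB)
    \<or> map f (pathsA @ pathsB) = map (indicator {pa4, pb1}) (pathsA @ pathsB)"
proof -
  have nonneg: "\<forall>P. f P \<ge> 0"
    using sol by (simp add: path_solution_def)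
  have demands: "(\<Sum>P\<leftarrow>pathsA. f P) \<ge> 1" "(\<Sum>P\<leftarrow>pathsB. f P) \<ge> 1"
    using sol unfolding path_solution_def demand_sums by blast+
  have loads:
    "edge_load f {L1, L2} \<le> 1" "edge_load f {H1, H2} \<le> 1" "edge_load f {L1, U1} \<le> 1"
    "edge_load f {L1, U2} \<le> 1" "edge_load f {H1, U1} \<le> 1" "edge_load f {H1, U2} \<le> 1"
    "edge_load f {L2, V1} \<le> 1" "edge_load f {L2, V2} \<le> 1" "edge_load f {H2, V1} \<le> 1"
    "edge_load f {H2, V2} \<le> 1"
    using sol by (simp_all add: path_solution_def edge_load_def E_def)
  have "map (indicator {pa0, pb5}) (pathsA @ pathsB)
      = [1, 0, 0, 0, 0, 0, 0, 0, 0, 0, 0, 0, 0, 1, 0, 0 :: real]"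
    "map (indicator {pa4, pb1}) (pathsA @ pathsB)
      = [0, 0, 0, 0, 1, 0, 0, 0, 0, 1, 0, 0, 0, 0, 0, 0 :: real]"
    by (simp_all add: pathsA_def pathsB_def H_path_defs)
  then show ?thesis
    using nonneg demands loads[unfolded edge_load_table]
      crossing_H_paths[THEN path_solution_crossing_vanishes[OF sol]]
    unfolding pathsA_def pathsB_def
    by (simp only: list.map sum_list.Cons sum_list.Nil append.simps list.inject) smt
qed

lemma path_solution_cases:
  assumes sol: "path_solution f"
  shows "f = indicator {pa0, pb5} \<or> f = indicator {pa4, pb1}"
proof -
  have vanishes: "f P = 0" if "P \<notin> set (pathsA @ pathsB)" for P
    using sol that unfolding path_solution_def H_path_iff by (metis less_eq_real_def)
  have agree: "f = indicator S"
    if "map f (pathsA @ pathsB) = map (indicator S) (pathsA @ pathsB)"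
      and "S \<subseteq> set (pathsA @ pathsB)" for S
  proof
    fix P show "f P = indicator S P"
      using that vanishes
      by (cases "P \<in> set (pathsA @ pathsB)") (auto simp: map_eq_conv indicator_def)
  qed
  have "{pa0, pb5} \<subseteq> set (pathsA @ pathsB)" "{pa4, pb1} \<subseteq> set (pathsA @ pathsB)"
    by (simp_all add: pathsA_def pathsB_def)
  with path_solution_values[OF sol] agree show ?thesis
    by blast
qed

theorem lemmaB2:
  shows "card {f. path_solution f} = 2 \<and>
         (\<forall>f. path_solution f \<longrightarrow> (\<forall>P. f P \<in> \<int>))"
proof -
  have "path_solution (indicator {pa0, pb5})" "path_solution (indicator {pa4, pb1})"
    by (rule disjoint_H_paths_path_solution; simp add: H_path_iff pathsA_def pathsB_def H_path_defs)+
  then have solutions: "{f. path_solution f} = {indicator {pa0, pb5}, indicator {pa4, pb1}}"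
    using path_solution_cases by blast
  have "indicator {pa0, pb5} pa0 \<noteq> (indicator {pa4, pb1} pa0 :: real)"
    by (simp add: H_path_defs)
  then have "indicator {pa0, pb5} \<noteq> (indicator {pa4, pb1} :: node list \<Rightarrow> real)"
    by metis
  then have "card {f. path_solution f} = 2"
    by (simp add: solutions)
  moreover have "indicator S P \<in> (\<int> :: real set)" for S :: "node list set" and P
    by (simp add: indicator_def)
  then have "\<forall>f. path_solution f \<longrightarrow> (\<forall>P. f P \<in> \<int>)"
    using path_solution_cases by blast
  ultimately show ?thesis ..
qed

end
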